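(* Suppose $\mathcal{H}$ and $\mathcal{H}'$ are hereditary graph properties and $\mathcal{H}$ is close to $\mathcal{H}'$. Then $M_{\mathcal{H}}(2\epsilon)\leq M_{\mathcal{H}'}(\epsilon)$ for every $\epsilon\in(0,1/2)$.
   Context: Graphs $G=(V,E)$ with $E\subseteq\binom V2$; $\overline E=\{(x,y)\in V^2:xy\in E\}$. A hereditary graph property is a class of finite graphs closed under isomorphism and induced subgraphs. $d_G(X,Y)=|\overline E\cap(X\times Y)|/(|X||Y|)$. A pair $(X,Y)$ is $\epsilon$-regular if $|d_G(X,Y)-d_G(X',Y')|\le\epsilon$ for all $X'\subseteq X,Y'\subseteq Y$ with $|X'|\ge\epsilon|X|,|Y'|\ge\epsilon|Y|$; a partition $\mathcal P$ of $V$ is $\epsilon$-regular if at least $(1-\epsilon)|V|^2$ pairs of $V^2$ lie in $X\times Y$ for some $\epsilon$-regular $(X,Y)\in\mathcal P^2$. $M_{\mathcal H}(\epsilon)$ is the least $M$ such that all sufficiently large graphs in $\mathcal H$ have an $\epsilon$-regular partition with at most $M$ parts. Graphs $G=(V,E)$, $G'=(V,E')$ on the same vertex set are $\delta$-close if $|\overline E\Delta\overline{E'}|\le\delta|V|^2$. $\mathcal H$ is close to $\mathcal H'$ if for all $\delta>0$ there is $N$ such that every $G\in\mathcal H$ with at least $N$ vertices is $\delta$-close to some $G'\in\mathcal H'$ on the same vertex set. *)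

theory Defs
  imports Main "HOL-Library.Disjoint_Sets" "HOL-Library.Extended_Nat" Complex_Main
begin

text \<open>A finite graph is a pair (V, E) of vertices (natural numbers) and edges
  (two-element subsets of V). Every finite graph is isomorphic to one of this form.\<close>
type_synonym graph = "nat set \<times> nat set set"

definition wf_graph :: "graph \<Rightarrow> bool" where
  "wf_graph G \<longleftrightarrow> finite (fst G) \<and> (\<forall>e\<in>snd G. e \<subseteq> fst G \<and> card e = 2)"

definition Ebar :: "graph \<Rightarrow> (nat \<times> nat) set" where
  "Ebar G = {(x, y). {x, y} \<in> snd G}"

definition density :: "graph \<Rightarrow> nat set \<Rightarrow> nat set \<Rightarrow> real" where
  "density G X Y = real (card (Ebar G \<inter> (X \<times> Y))) / (real (card X) * real (card Y))"

definition regular_pair :: "graph \<Rightarrow> real \<Rightarrow> nat set \<Rightarrow> nat set \<Rightarrow> bool" where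
  "regular_pair G \<epsilon> X Y \<longleftrightarrow>
     (\<forall>X' Y'. X' \<subseteq> X \<longrightarrow> Y' \<subseteq> Y \<longrightarrow> real (card X') \<ge> \<epsilon> * real (card X)
        \<longrightarrow> real (card Y') \<ge> \<epsilon> * real (card Y)
        \<longrightarrow> \<bar>density G X Y - density G X' Y'\<bar> \<le> \<epsilon>)"

definition regular_partition :: "graph \<Rightarrow> real \<Rightarrow> nat set set \<Rightarrow> bool" where
  "regular_partition G \<epsilon> P \<longleftrightarrow> partition_on (fst G) P \<and>
     real (card ((fst G \<times> fst G) \<inter>
        (\<Union>{X \<times> Y | X Y. X \<in> P \<and> Y \<in> P \<and> regular_pair G \<epsilon> X Y})))
       \<ge> (1 - \<epsilon>) * real (card (fst G))^2"

definition induced_subgraph :: "graph \<Rightarrow> nat set \<Rightarrow> graph" where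
  "induced_subgraph G W = (W, {e \<in> snd G. e \<subseteq> W})"

definition graph_iso :: "graph \<Rightarrow> graph \<Rightarrow> bool" where
  "graph_iso G H \<longleftrightarrow> (\<exists>f. bij_betw f (fst G) (fst H) \<and> snd H = (\<lambda>e. f ` e) ` snd G)"

definition hereditary :: "graph set \<Rightarrow> bool" where
  "hereditary \<H> \<longleftrightarrow> (\<forall>G\<in>\<H>. wf_graph G)
     \<and> (\<forall>G H. G \<in> \<H> \<longrightarrow> wf_graph H \<longrightarrow> graph_iso G H \<longrightarrow> H \<in> \<H>)
     \<and> (\<forall>G W. G \<in> \<H> \<longrightarrow> W \<subseteq> fst G \<longrightarrow> induced_subgraph G W \<in> \<H>)"

definition reg_bound :: "graph set \<Rightarrow> real \<Rightarrow> nat \<Rightarrow> bool" where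
  "reg_bound \<H> \<epsilon> M \<longleftrightarrow> (\<exists>N. \<forall>G\<in>\<H>. card (fst G) \<ge> N \<longrightarrow>
      (\<exists>P. regular_partition G \<epsilon> P \<and> card P \<le> M))"

text \<open>M_H(eps): the least such M (infinity if none exists; by Szemeredi's
  regularity lemma it always exists).\<close>
definition M_reg :: "graph set \<Rightarrow> real \<Rightarrow> enat" where
  "M_reg \<H> \<epsilon> = (if \<exists>M. reg_bound \<H> \<epsilon> M then enat (LEAST M. reg_bound \<H> \<epsilon> M) else \<infinity>)"

definition delta_close :: "real \<Rightarrow> graph \<Rightarrow> graph \<Rightarrow> bool" where
  "delta_close \<delta> G G' \<longleftrightarrow> fst G = fst G' \<and>
     real (card ((Ebar G - Ebar G') \<union> (Ebar G' - Ebar G))) \<le> \<delta> * real (card (fst G))^2"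

definition close_to :: "graph set \<Rightarrow> graph set \<Rightarrow> bool" where
  "close_to \<H> \<H>' \<longleftrightarrow> (\<forall>\<delta>>0. \<exists>N. \<forall>G\<in>\<H>. card (fst G) \<ge> N \<longrightarrow>
      (\<exists>G'\<in>\<H>'. delta_close \<delta> G G'))"

end

theory Submission
  imports Defs
begin

text \<open>Keep an \<open>\<epsilon>\<close>-regular partition \<open>P\<close> of \<open>G'\<close> with at most \<open>M\<close> parts for a graph \<open>G\<close>
  that is \<open>\<delta>\<close>-close to \<open>G'\<close>, where \<open>\<delta> = 2\<epsilon>\<^sup>3\<eta>\<^sup>2\<close>. Inside \<open>X \<times> Y\<close> for parts of size at least
  \<open>\<eta>n\<close> there are at most \<open>\<delta>n\<^sup>2 \<le> 2\<epsilon>\<^sup>3|X||Y|\<close> edited vertex pairs, so every sub-pair of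
  relative size \<open>2\<epsilon>\<close> changes its density by at most \<open>\<epsilon>/2\<close>, and \<open>\<epsilon>\<close>-regular pairs of \<open>G'\<close>
  stay \<open>2\<epsilon>\<close>-regular in \<open>G\<close>. Parts smaller than \<open>\<eta>n\<close> cover at most \<open>M\<eta>n\<close> vertices, hence
  at most \<open>2M\<eta>n\<^sup>2 \<le> \<epsilon>n\<^sup>2\<close> vertex pairs, which is the price of the second \<open>\<epsilon>\<close>.\<close>

lemma Ebar_subset_vertices: "wf_graph G \<Longrightarrow> Ebar G \<subseteq> fst G \<times> fst G"
  unfolding wf_graph_def Ebar_def by auto

lemma finite_sym_diff_Ebar:
  assumes "wf_graph G" "wf_graph G'" "fst G' = fst G"
  shows "finite (sym_diff (Ebar G) (Ebar G'))"
proof -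
  have "sym_diff (Ebar G) (Ebar G') \<subseteq> fst G \<times> fst G"
    using Ebar_subset_vertices[OF assms(1)] Ebar_subset_vertices[OF assms(2)] assms(3)
    by blast
  then show ?thesis
    using assms(1) finite_subset unfolding wf_graph_def by blast
qed

lemma card_Int_le_card_Int_add_diff:
  assumes "finite C"
  shows "card (A \<inter> C) \<le> card (B \<inter> C) + card ((A - B) \<inter> C)"
proof -
  have "card (A \<inter> C) \<le> card ((B \<inter> C) \<union> ((A - B) \<inter> C))"
    using assms by (intro card_mono) auto
  also have "\<dots> \<le> card (B \<inter> C) + card ((A - B) \<inter> C)"
    by (rule card_Un_le)
  finally show ?thesis .
qed

lemma abs_card_Int_diff_le:
  assumes "finite C"
  shows "\<bar>real (card (A \<inter> C)) - real (card (B \<inter> C))\<bar> \<le> real (card (sym_diff A B \<inter> C))"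
proof -
  have "card ((A - B) \<inter> C) \<le> card (sym_diff A B \<inter> C)"
       "card ((B - A) \<inter> C) \<le> card (sym_diff A B \<inter> C)"
    using assms by (auto intro: card_mono)
  then show ?thesis
    using card_Int_le_card_Int_add_diff[OF assms, of A B]
      card_Int_le_card_Int_add_diff[OF assms, of B A]
    by linarith
qed

lemma abs_density_diff_le:
  assumes "finite X" "finite Y" "0 \<le> c"
    and few: "real (card (sym_diff (Ebar G) (Ebar G') \<inter> (X \<times> Y))) \<le> c * (real (card X) * real (card Y))"
  shows "\<bar>density G X Y - density G' X Y\<bar> \<le> c"
proof -
  have "\<bar>density G X Y - density G' X Y\<bar>
      = \<bar>real (card (Ebar G \<inter> (X \<times> Y))) - real (card (Ebar G' \<inter> (X \<times> Y)))\<bar>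
        / (real (card X) * real (card Y))"
    unfolding density_def by (simp add: diff_divide_distrib[symmetric])
  also have "\<dots> \<le> real (card (sym_diff (Ebar G) (Ebar G') \<inter> (X \<times> Y))) / (real (card X) * real (card Y))"
    by (intro divide_right_mono abs_card_Int_diff_le) (use assms in auto)
  also have "\<dots> \<le> c"
    using few \<open>0 \<le> c\<close> by (cases "card X = 0 \<or> card Y = 0") (auto simp: divide_le_eq)
  finally show ?thesis .
qed

lemma regular_pair_double_if_few_edits:
  assumes "finite X" "finite Y" "0 \<le> \<epsilon>"
    and reg: "regular_pair G' \<epsilon> X Y"
    and few: "real (card (sym_diff (Ebar G) (Ebar G') \<inter> (X \<times> Y)))
      \<le> 2 * \<epsilon>^3 * real (card X) * real (card Y)"
  shows "regular_pair G (2 * \<epsilon>) X Y"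
  unfolding regular_pair_def
proof (intro allI impI)
  fix X' Y' assume sub: "X' \<subseteq> X" "Y' \<subseteq> Y"
    and large: "2 * \<epsilon> * real (card X) \<le> real (card X')" "2 * \<epsilon> * real (card Y) \<le> real (card Y')"
  define D where "D = sym_diff (Ebar G) (Ebar G')"
  have fin': "finite X'" "finite Y'"
    using sub assms(1,2) finite_subset by auto
  have "2 * \<epsilon>^3 * real (card X) * real (card Y)
      = \<epsilon> / 2 * ((2 * \<epsilon> * real (card X)) * (2 * \<epsilon> * real (card Y)))"
    by (simp add: power3_eq_cube)
  also have "\<dots> \<le> \<epsilon> / 2 * (real (card X') * real (card Y'))"
    using large \<open>0 \<le> \<epsilon>\<close> by (intro mult_left_mono mult_mono) auto
  finally have few': "real (card (D \<inter> (X \<times> Y))) \<le> \<epsilon> / 2 * (real (card X') * real (card Y'))"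
    using few unfolding D_def by linarith
  have "card (D \<inter> (X' \<times> Y')) \<le> card (D \<inter> (X \<times> Y))"
    using sub assms(1,2) by (intro card_mono) auto
  then have near': "\<bar>density G X' Y' - density G' X' Y'\<bar> \<le> \<epsilon> / 2"
    using few' \<open>0 \<le> \<epsilon>\<close> unfolding D_def by (intro abs_density_diff_le[OF fin']) auto
  have "card X' \<le> card X" "card Y' \<le> card Y"
    using sub assms(1,2) by (auto intro: card_mono)
  then have "\<epsilon> / 2 * (real (card X') * real (card Y')) \<le> \<epsilon> / 2 * (real (card X) * real (card Y))"
    using \<open>0 \<le> \<epsilon>\<close> by (intro mult_left_mono mult_mono) auto
  then have near: "\<bar>density G X Y - density G' X Y\<bar> \<le> \<epsilon> / 2"
    using few' \<open>0 \<le> \<epsilon>\<close> unfolding D_def by (intro abs_density_diff_le[OF assms(1,2)]) auto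
  have "\<epsilon> * real (card X) \<le> real (card X')" "\<epsilon> * real (card Y) \<le> real (card Y')"
    using large \<open>0 \<le> \<epsilon>\<close> by (smt (verit) mult_right_mono of_nat_0_le_iff)+
  then have "\<bar>density G' X Y - density G' X' Y'\<bar> \<le> \<epsilon>"
    using reg sub unfolding regular_pair_def by blast
  then show "\<bar>density G X Y - density G X' Y'\<bar> \<le> 2 * \<epsilon>"
    using near near' by linarith
qed

lemma card_Union_small_parts_le:
  assumes "finite P" "0 \<le> t"
  shows "real (card (\<Union>{X \<in> P. real (card X) < t})) \<le> real (card P) * t"
proof -
  define S where "S = {X \<in> P. real (card X) < t}"
  have "card (\<Union>S) \<le> (\<Sum>X\<in>S. card X)"
    by (rule card_Union_le_sum_card)
  then have "real (card (\<Union>S)) \<le> (\<Sum>X\<in>S. real (card X))"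
    by (simp only: of_nat_sum[symmetric] of_nat_le_iff)
  also have "\<dots> \<le> real (card S) * t"
    by (rule sum_bounded_above) (simp add: S_def less_imp_le)
  also have "\<dots> \<le> real (card P) * t"
    using assms unfolding S_def by (intro mult_right_mono of_nat_mono card_mono) auto
  finally show ?thesis
    unfolding S_def .
qed

lemma regular_partition_if_large_pairs_regular:
  fixes G G' :: graph
  defines "n \<equiv> real (card (fst G))"
  assumes "finite (fst G)" "fst G' = fst G"
    and reg: "regular_partition G' \<epsilon> P" and "card P \<le> M"
    and "0 \<le> \<eta>" and budget: "\<epsilon> + 2 * real M * \<eta> \<le> \<epsilon>'"
    and large_regular: "\<And>X Y. X \<in> P \<Longrightarrow> Y \<in> P \<Longrightarrow> regular_pair G' \<epsilon> X Y
      \<Longrightarrow> \<eta> * n \<le> real (card X) \<Longrightarrow> \<eta> * n \<le> real (card Y) \<Longrightarrow> regular_pair G \<epsilon>' X Y"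
  shows "regular_partition G \<epsilon>' P"
proof -
  define V where "V = fst G"
  define regular_pairs where "regular_pairs H e =
    (V \<times> V) \<inter> \<Union>{X \<times> Y | X Y. X \<in> P \<and> Y \<in> P \<and> regular_pair H e X Y}" for H e
  define B where "B = \<Union>{X \<in> P. real (card X) < \<eta> * n}"
  have part: "partition_on V P"
    using reg \<open>fst G' = fst G\<close> unfolding regular_partition_def V_def by simp
  have "finite V"
    using \<open>finite (fst G)\<close> unfolding V_def .
  then have "finite P"
    using part by (rule finite_elements)
  have "B \<subseteq> V"
    using part partition_onD1 unfolding B_def by blast
  have "regular_pairs G' \<epsilon> \<subseteq> regular_pairs G \<epsilon>' \<union> (B \<times> V) \<union> (V \<times> B)"
  proof
    fix p assume "p \<in> regular_pairs G' \<epsilon>"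
    then obtain x y X Y where p: "p = (x, y)" "x \<in> V" "y \<in> V" "X \<in> P" "Y \<in> P"
      "regular_pair G' \<epsilon> X Y" "x \<in> X" "y \<in> Y"
      unfolding regular_pairs_def by blast
    show "p \<in> regular_pairs G \<epsilon>' \<union> (B \<times> V) \<union> (V \<times> B)"
    proof (cases "x \<in> B \<or> y \<in> B")
      case False
      then have "\<not> real (card X) < \<eta> * n" "\<not> real (card Y) < \<eta> * n"
        using p unfolding B_def by blast+
      then have "\<eta> * n \<le> real (card X)" "\<eta> * n \<le> real (card Y)"
        by linarith+
      then have "regular_pair G \<epsilon>' X Y"
        using large_regular p by blast
      then show ?thesis
        using p unfolding regular_pairs_def by blast
    qed (use p in blast)
  qed
  then have "card (regular_pairs G' \<epsilon>) \<le> card (regular_pairs G \<epsilon>' \<union> (B \<times> V) \<union> (V \<times> B))"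
    using \<open>finite V\<close> \<open>B \<subseteq> V\<close> by (intro card_mono) (auto simp: regular_pairs_def dest: finite_subset)
  also have "\<dots> \<le> card (regular_pairs G \<epsilon>') + card (B \<times> V) + card (V \<times> B)"
    by (meson add_le_mono card_Un_le le_refl order_trans)
  also have "\<dots> = card (regular_pairs G \<epsilon>') + 2 * (card B * card V)"
    by (simp add: card_cartesian_product)
  finally have "real (card (regular_pairs G' \<epsilon>)) \<le> real (card (regular_pairs G \<epsilon>') + 2 * (card B * card V))"
    by (rule of_nat_mono)
  also have "\<dots> = real (card (regular_pairs G \<epsilon>')) + 2 * real (card B) * n"
    by (simp add: n_def V_def mult.assoc)
  finally have covered: "real (card (regular_pairs G' \<epsilon>)) \<le> real (card (regular_pairs G \<epsilon>')) + 2 * real (card B) * n" .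
  have "real (card B) \<le> real (card P) * (\<eta> * n)"
    unfolding B_def by (rule card_Union_small_parts_le[OF \<open>finite P\<close>]) (simp add: n_def \<open>0 \<le> \<eta>\<close>)
  also have "\<dots> \<le> real M * (\<eta> * n)"
    using \<open>card P \<le> M\<close> \<open>0 \<le> \<eta>\<close> by (intro mult_right_mono) (auto simp: n_def)
  finally have "real (card B) \<le> real M * (\<eta> * n)" .
  then have "2 * real (card B) * n \<le> 2 * (real M * (\<eta> * n)) * n"
    by (intro mult_right_mono) (auto simp: n_def)
  also have "\<dots> = 2 * real M * \<eta> * n\<^sup>2"
    by (simp add: power2_eq_square)
  also have "\<dots> \<le> (\<epsilon>' - \<epsilon>) * n\<^sup>2"
    using budget by (intro mult_right_mono) auto
  finally have small: "2 * real (card B) * n \<le> (\<epsilon>' - \<epsilon>) * n\<^sup>2" .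
  have "(1 - \<epsilon>) * n\<^sup>2 \<le> real (card (regular_pairs G' \<epsilon>))"
    using reg \<open>fst G' = fst G\<close> unfolding regular_partition_def regular_pairs_def n_def V_def by simp
  then have "(1 - \<epsilon>') * n\<^sup>2 \<le> real (card (regular_pairs G \<epsilon>'))"
    using covered small unfolding left_diff_distrib by linarith
  then show ?thesis
    using part unfolding regular_partition_def regular_pairs_def n_def V_def by simp
qed

lemma regular_partition_double_if_delta_close:
  assumes "wf_graph G" "wf_graph G'" and close: "delta_close (2 * \<epsilon>^3 * \<eta>^2) G G'"
    and P: "regular_partition G' \<epsilon> P" "card P \<le> M"
    and "0 < \<epsilon>" "0 \<le> \<eta>" and budget: "\<epsilon> + 2 * real M * \<eta> \<le> 2 * \<epsilon>"
  shows "regular_partition G (2 * \<epsilon>) P"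
proof -
  define n where "n = real (card (fst G))"
  define D where "D = sym_diff (Ebar G) (Ebar G')"
  have same_vertices: "fst G' = fst G"
    using close unfolding delta_close_def by simp
  have "finite (fst G)"
    using \<open>wf_graph G\<close> unfolding wf_graph_def by blast
  have "finite D"
    unfolding D_def using assms(1,2) same_vertices by (rule finite_sym_diff_Ebar)
  show ?thesis
  proof (rule regular_partition_if_large_pairs_regular
      [OF \<open>finite (fst G)\<close> same_vertices P \<open>0 \<le> \<eta>\<close> budget])
    fix X Y assume XY: "X \<in> P" "Y \<in> P" "regular_pair G' \<epsilon> X Y"
      and sizes: "\<eta> * real (card (fst G)) \<le> real (card X)" "\<eta> * real (card (fst G)) \<le> real (card Y)"
    have "X \<subseteq> fst G" "Y \<subseteq> fst G"
      using P(1) XY(1,2) same_vertices unfolding regular_partition_def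
      by (metis partition_onD1 Union_upper)+
    then have "finite X" "finite Y"
      using \<open>finite (fst G)\<close> finite_subset by auto
    have "card (D \<inter> (X \<times> Y)) \<le> card D"
      using \<open>finite D\<close> by (intro card_mono) auto
    also have "real (card D) \<le> 2 * \<epsilon>^3 * \<eta>^2 * n\<^sup>2"
      using close unfolding delta_close_def D_def n_def by blast
    also have "\<dots> = 2 * \<epsilon>^3 * (\<eta> * n) * (\<eta> * n)"
      by (simp add: power2_eq_square mult_ac)
    also have "\<dots> \<le> 2 * \<epsilon>^3 * real (card X) * real (card Y)"
      using sizes \<open>0 < \<epsilon>\<close> \<open>0 \<le> \<eta>\<close> unfolding n_def by (intro mult_mono) auto
    finally show "regular_pair G (2 * \<epsilon>) X Y"
      using regular_pair_double_if_few_edits[OF \<open>finite X\<close> \<open>finite Y\<close> _ XY(3)] \<open>0 < \<epsilon>\<close>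
      unfolding D_def by simp
  qed
qed

lemma reg_bound_double_if_close_to:
  assumes wf: "\<forall>G\<in>\<H>. wf_graph G" "\<forall>G'\<in>\<H>'. wf_graph G'"
    and "close_to \<H> \<H>'" and "0 < \<epsilon>" and "reg_bound \<H>' \<epsilon> M"
  shows "reg_bound \<H> (2 * \<epsilon>) M"
proof -
  define \<eta> where "\<eta> = \<epsilon> / (2 * (real M + 1))"
  have "0 < \<eta>" and "0 < 2 * \<epsilon>^3 * \<eta>^2"
    using \<open>0 < \<epsilon>\<close> unfolding \<eta>_def by simp_all
  have budget: "\<epsilon> + 2 * real M * \<eta> \<le> 2 * \<epsilon>"
    using \<open>0 < \<epsilon>\<close> unfolding \<eta>_def by (simp add: field_simps)
  obtain N' where N': "\<And>G'. G' \<in> \<H>' \<Longrightarrow> N' \<le> card (fst G')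
      \<Longrightarrow> \<exists>P. regular_partition G' \<epsilon> P \<and> card P \<le> M"
    using \<open>reg_bound \<H>' \<epsilon> M\<close> unfolding reg_bound_def by blast
  obtain N where N: "\<And>G. G \<in> \<H> \<Longrightarrow> N \<le> card (fst G)
      \<Longrightarrow> \<exists>G'\<in>\<H>'. delta_close (2 * \<epsilon>^3 * \<eta>^2) G G'"
    using \<open>close_to \<H> \<H>'\<close> \<open>0 < 2 * \<epsilon>^3 * \<eta>^2\<close> unfolding close_to_def by blast
  show ?thesis
    unfolding reg_bound_def
  proof (intro exI[of _ "max N N'"] ballI impI)
    fix G assume "G \<in> \<H>" and large: "max N N' \<le> card (fst G)"
    then obtain G' where "G' \<in> \<H>'" and close: "delta_close (2 * \<epsilon>^3 * \<eta>^2) G G'"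
      using N[OF \<open>G \<in> \<H>\<close>] by (meson max.boundedE)
    moreover have "N' \<le> card (fst G')"
      using large close unfolding delta_close_def by simp
    ultimately obtain P where P: "regular_partition G' \<epsilon> P" "card P \<le> M"
      using N' by blast
    then have "regular_partition G (2 * \<epsilon>) P"
      using wf \<open>G \<in> \<H>\<close> \<open>G' \<in> \<H>'\<close> close \<open>0 < \<epsilon>\<close> \<open>0 < \<eta>\<close> budget
      by (intro regular_partition_double_if_delta_close) auto
    then show "\<exists>P. regular_partition G (2 * \<epsilon>) P \<and> card P \<le> M"
      using P(2) by blast
  qed
qed

lemma M_reg_le_if_reg_bound: "reg_bound \<H> \<epsilon> M \<Longrightarrow> M_reg \<H> \<epsilon> \<le> enat M"
  unfolding M_reg_def by (auto intro: Least_le)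

theorem proposition3p6:
  fixes \<H> \<H>' :: "graph set" and \<epsilon> :: real
  assumes "hereditary \<H>" and "hereditary \<H>'" and "close_to \<H> \<H>'"
    and "0 < \<epsilon>" and "\<epsilon> < 1/2"
  shows "M_reg \<H> (2 * \<epsilon>) \<le> M_reg \<H>' \<epsilon>"
proof (cases "\<exists>M. reg_bound \<H>' \<epsilon> M")
  case True
  define M where "M = (LEAST M. reg_bound \<H>' \<epsilon> M)"
  have "reg_bound \<H>' \<epsilon> M"
    unfolding M_def using True by (rule LeastI_ex)
  then have "reg_bound \<H> (2 * \<epsilon>) M"
    using assms(1-4) unfolding hereditary_def by (intro reg_bound_double_if_close_to) auto
  moreover have "M_reg \<H>' \<epsilon> = enat M"
    using True unfolding M_reg_def M_def by simp
  ultimately show ?thesis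
    by (simp add: M_reg_le_if_reg_bound)
qed (simp add: M_reg_def)

end
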